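(* $\mathfrak{mc}(\mathsf{null},\subseteq)=\operatorname{non}(\mathsf{null})$.
   Context: $\mathsf{null}$ is the ideal of Lebesgue measure zero subsets of $2^\omega$, ordered by inclusion. For a poset $P$, a chain is a set of pairwise comparable elements and $\mathfrak{mc}(P)$ is the minimal cardinality of a maximal (under inclusion) chain. $\operatorname{non}(\mathsf{null})$ is the minimal size of a subset of $2^\omega$ that is not Lebesgue null. *)

theory Defs
  imports "HOL-Probability.Probability"
begin

unbundle cardinal_syntax

definition cantor_measure :: "(nat \<Rightarrow> bool) measure" where
  "cantor_measure = PiM UNIV (\<lambda>_. measure_pmf (bernoulli_pmf (1/2)))"

text \<open>The null ideal: all subsets of 2^omega of (outer) Lebesgue measure zero,
  i.e. subsets of measurable null sets.\<close>
definition null :: "(nat \<Rightarrow> bool) set set" where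
  "null = {A. \<exists>B \<in> null_sets cantor_measure. A \<subseteq> B}"

definition min_card_in :: "'a set set \<Rightarrow> 'a set \<Rightarrow> bool" where
  "min_card_in S A \<longleftrightarrow> A \<in> S \<and> (\<forall>B \<in> S. card_of A \<le>o card_of B)"

definition maximal_chains_null :: "(nat \<Rightarrow> bool) set set set" where
  "maximal_chains_null = {C. subset.maxchain null C}"

definition non_null_sets :: "(nat \<Rightarrow> bool) set set" where
  "non_null_sets = {X. X \<notin> null}"

end

theory Submission
  imports Defs
begin

text \<open>For any proper ideal \<open>I\<close> of sets containing the singletons, both inequalities between
  the least size of a maximal chain and \<open>non(I)\<close> are elementary.
  If \<open>C\<close> is a maximal chain, then \<open>\<Union>C\<close> is not in \<open>I\<close>: otherwise \<open>\<Union>C\<close> plus a point outside it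
  could be added to \<open>C\<close>. Moreover every point \<open>x \<in> \<Union>C\<close> has a least member of \<open>C\<close> containing
  it, and maximality (removing a point from that member) makes this assignment injective,
  so \<open>|\<Union>C| \<le> |C|\<close>.
  Conversely, well-order a non-member \<open>X\<close> of least size in order type \<open>|X|\<close>: its proper initial
  segments are smaller than \<open>X\<close>, hence in \<open>I\<close>, and they form a maximal chain of size \<open>|X|\<close>,
  because a set comparable with all initial segments is either an initial segment itself
  or covers \<open>X\<close> up to at most one point.\<close>

lemma subset_maxchain_memI:
  assumes C: "subset.maxchain A C" and "N \<in> A" and comparable: "\<forall>X\<in>C. X \<subseteq> N \<or> N \<subseteq> X"
  shows "N \<in> C"
proof (rule ccontr)
  assume "N \<notin> C"
  have "subset.chain A (insert N C)"
    using C \<open>N \<in> A\<close> comparable by (auto simp: subset.maxchain_def subset_chain_def)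
  moreover have "C \<subset> insert N C" using \<open>N \<notin> C\<close> by auto
  ultimately show False using C by (auto simp: subset.maxchain_def)
qed

lemma min_card_in_exists: "S \<noteq> {} \<Longrightarrow> \<exists>A. min_card_in S A"
  using exists_minim_Well_order[of "card_of ` S"] card_of_Well_order
  by (fastforce simp: min_card_in_def)

lemma Field_subset_insert_Union_underS:
  assumes "Linear_order r"
  shows "\<exists>m. Field r \<subseteq> insert m (\<Union>y\<in>Field r. underS r y)"
proof -
  let ?U = "\<Union>y\<in>Field r. underS r y"
  have unique: "x = x'" if x: "x \<in> Field r - ?U" and x': "x' \<in> Field r - ?U" for x x'
  proof (rule ccontr)
    assume "x \<noteq> x'"
    with x x' assms have "(x, x') \<in> r \<or> (x', x) \<in> r"
      unfolding linear_order_on_def total_on_def by blast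
    with x x' \<open>x \<noteq> x'\<close> show False by (auto simp: underS_def)
  qed
  show ?thesis
  proof (cases "Field r - ?U = {}")
    case False
    then obtain m where "m \<in> Field r - ?U" by blast
    with unique show ?thesis by blast
  qed blast
qed

text \<open>Only heredity, closure under adding a point and properness are needed below;
  closure under finite unions is not.\<close>
locale proper_set_ideal =
  fixes I :: "'a set set"
  assumes subset_closed: "A \<in> I \<Longrightarrow> B \<subseteq> A \<Longrightarrow> B \<in> I"
    and insert_closed: "A \<in> I \<Longrightarrow> insert x A \<in> I"
    and UNIV_notin: "UNIV \<notin> I"
begin

lemma Union_maxchain_notin:
  assumes C: "subset.maxchain I C"
  shows "\<Union>C \<notin> I"
proof
  assume U: "\<Union>C \<in> I"
  obtain z where z: "z \<notin> \<Union>C" using U UNIV_notin by (metis UNIV_eq_I)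
  have "X \<subseteq> insert z (\<Union>C)" if "X \<in> C" for X using that by auto
  then have "insert z (\<Union>C) \<in> C"
    using subset_maxchain_memI[OF C insert_closed[OF U]] by blast
  with z show False by auto
qed

lemma Inter_containing_in_maxchain:
  assumes C: "subset.maxchain I C" and x: "x \<in> \<Union>C"
  shows "\<Inter>{X\<in>C. x \<in> X} \<in> C"
proof (rule subset_maxchain_memI[OF C])
  have chain: "C \<subseteq> I" "\<forall>X\<in>C. \<forall>Y\<in>C. X \<subseteq> Y \<or> Y \<subseteq> X"
    using C by (auto simp: subset.maxchain_def subset_chain_def)
  from x obtain X where "X \<in> C" "x \<in> X" by auto
  then show "\<Inter>{X\<in>C. x \<in> X} \<in> I"
    using chain(1) by (blast intro: subset_closed)
  show "\<forall>Y\<in>C. Y \<subseteq> \<Inter>{X\<in>C. x \<in> X} \<or> \<Inter>{X\<in>C. x \<in> X} \<subseteq> Y"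
    using chain(2) by blast
qed

lemma card_Union_maxchain_le:
  assumes C: "subset.maxchain I C"
  shows "|\<Union>C| \<le>o |C|"
proof -
  define least where "least x = \<Inter>{X\<in>C. x \<in> X}" for x
  have least_in: "least x \<in> C" if "x \<in> \<Union>C" for x
    using Inter_containing_in_maxchain[OF C that] by (simp add: least_def)
  have "inj_on least (\<Union>C)"
  proof (rule inj_onI, rule ccontr)
    fix x y assume x: "x \<in> \<Union>C" and "y \<in> \<Union>C" and eq: "least x = least y" and "x \<noteq> y"
    have "least x - {y} \<in> C"
    proof (rule subset_maxchain_memI[OF C])
      show "least x - {y} \<in> I"
        using least_in[OF x] C by (auto simp: subset.maxchain_def subset_chain_def intro: subset_closed)
      show "\<forall>X\<in>C. X \<subseteq> least x - {y} \<or> least x - {y} \<subseteq> X"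
      proof
        fix X assume "X \<in> C"
        then have "X \<subseteq> least x \<or> least x \<subseteq> X"
          using least_in[OF x] C by (auto simp: subset.maxchain_def subset_chain_def)
        moreover have "y \<in> X \<Longrightarrow> least x \<subseteq> X"
          using \<open>X \<in> C\<close> eq by (auto simp: least_def)
        ultimately show "X \<subseteq> least x - {y} \<or> least x - {y} \<subseteq> X" by blast
      qed
    qed
    then have "least x \<subseteq> least x - {y}"
      using \<open>x \<noteq> y\<close> by (auto simp: least_def)
    moreover have "y \<in> least x" using eq by (simp add: least_def)
    ultimately show False by blast
  qed
  moreover have "least ` \<Union>C \<subseteq> C" using least_in by auto
  ultimately show ?thesis using card_of_ordLeq by blast
qed

lemma comparable_with_underS_imp_underS:
  assumes wo: "Well_order r" and "Field r \<notin> I" and "N \<in> I"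
    and comparable: "\<forall>y\<in>Field r. underS r y \<subseteq> N \<or> N \<subseteq> underS r y"
  shows "N \<in> underS r ` Field r"
proof (cases "\<forall>y\<in>Field r. underS r y \<subseteq> N")
  case True
  have "Linear_order r" using wo by (simp add: well_order_on_def)
  then obtain m where "Field r \<subseteq> insert m (\<Union>y\<in>Field r. underS r y)"
    using Field_subset_insert_Union_underS by blast
  with True have "Field r \<subseteq> insert m N" by blast
  moreover have "insert m N \<in> I" using \<open>N \<in> I\<close> by (rule insert_closed)
  ultimately have "Field r \<in> I" by (rule subset_closed[rotated])
  with \<open>Field r \<notin> I\<close> show ?thesis by contradiction
next
  case False
  then obtain y where "N \<subseteq> underS r y" using comparable by blast
  have "wo_rel.ofilter r N"
    unfolding wo_rel.ofilter_def[OF wo[folded wo_rel_def]]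
  proof (intro conjI ballI)
    show N_Field: "N \<subseteq> Field r"
      using \<open>N \<subseteq> underS r y\<close> Order_Relation.underS_Field[of r y] by (rule subset_trans)
    fix u assume "u \<in> N"
    then have "u \<in> Field r" using N_Field by blast
    have "\<not> N \<subseteq> underS r u" using \<open>u \<in> N\<close> underS_notIn by fast
    then have "underS r u \<subseteq> N" using comparable \<open>u \<in> Field r\<close> by blast
    moreover have "Refl r" using wo by (simp add: order_on_defs)
    ultimately show "under r u \<subseteq> N"
      using Refl_under_underS[OF \<open>Refl r\<close> \<open>u \<in> Field r\<close>] \<open>u \<in> N\<close> by auto
  qed
  then have "(\<exists>a\<in>Field r. N = underS r a) \<or> N = Field r"
    using wo_rel.ofilter_underS_Field[OF wo[folded wo_rel_def]] by blast
  moreover have "N \<noteq> Field r" using \<open>Field r \<notin> I\<close> \<open>N \<in> I\<close> by blast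
  ultimately show ?thesis by blast
qed

lemma maxchain_underS:
  assumes wo: "Well_order r" and segments: "\<forall>y\<in>Field r. underS r y \<in> I" and "Field r \<notin> I"
  shows "subset.maxchain I (underS r ` Field r)"
proof -
  have chain: "subset.chain I (underS r ` Field r)"
    using segments wo_rel.ofilter_linord[OF wo[folded wo_rel_def]] wo_rel.underS_ofilter[OF wo[folded wo_rel_def]]
    by (auto simp: subset_chain_def)
  have "S \<subseteq> underS r ` Field r" if S: "subset.chain I S" "underS r ` Field r \<subseteq> S" for S
  proof
    fix N assume "N \<in> S"
    with S have "N \<in> I" "\<forall>y\<in>Field r. underS r y \<subseteq> N \<or> N \<subseteq> underS r y"
      unfolding subset_chain_def image_subset_iff by blast+
    then show "N \<in> underS r ` Field r"
      using comparable_with_underS_imp_underS[OF wo \<open>Field r \<notin> I\<close>] by blast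
  qed
  with chain show ?thesis by (auto simp: subset.maxchain_def)
qed

lemma exists_maxchain_card_le:
  assumes X: "min_card_in (- I) X"
  shows "\<exists>C. subset.maxchain I C \<and> |C| \<le>o |X|"
proof -
  have "X \<notin> I" and X_min: "\<And>B. B \<notin> I \<Longrightarrow> |X| \<le>o |B|"
    using X by (auto simp: min_card_in_def)
  have "underS (card_of X) y \<in> I" if "y \<in> X" for y
  proof (rule ccontr)
    assume "underS (card_of X) y \<notin> I"
    then have "|X| \<le>o |underS (card_of X) y|" by (rule X_min)
    moreover have "|underS (card_of X) y| <o |X|"
      using card_of_underS[OF card_of_Card_order, of y X] that by (simp add: Field_card_of)
    ultimately show False using not_ordLess_ordLeq by blast
  qed
  then have "subset.maxchain I (underS (card_of X) ` X)"
    using maxchain_underS[OF card_of_Well_order[of X]] \<open>X \<notin> I\<close>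
    unfolding Field_card_of by blast
  moreover have "|underS (card_of X) ` X| \<le>o |X|" by (rule card_of_image)
  ultimately show ?thesis by blast
qed

theorem mc_eq_non:
  "\<exists>C X. min_card_in {C. subset.maxchain I C} C \<and> min_card_in (- I) X \<and> card_of C =o card_of X"
proof -
  obtain C0 where "subset.maxchain I C0" using subset.Hausdorff by blast
  then obtain C where C: "min_card_in {C. subset.maxchain I C} C"
    using min_card_in_exists[of "{C. subset.maxchain I C}"] by blast
  have "UNIV \<in> - I" using UNIV_notin by simp
  then obtain X where X: "min_card_in (- I) X"
    using min_card_in_exists[of "- I"] by blast
  have C_max: "subset.maxchain I C" and C_min: "\<And>D. subset.maxchain I D \<Longrightarrow> |C| \<le>o |D|"
    using C by (simp_all add: min_card_in_def)
  obtain D where D: "subset.maxchain I D" "|D| \<le>o |X|"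
    using exists_maxchain_card_le[OF X] by blast
  have "|C| \<le>o |X|" using ordLeq_transitive[OF C_min[OF D(1)] D(2)] .
  moreover have "|X| \<le>o |\<Union>C|"
    using X Union_maxchain_notin[OF C_max] by (simp add: min_card_in_def)
  then have "|X| \<le>o |C|" using ordLeq_transitive card_Union_maxchain_le[OF C_max] by blast
  ultimately have "|C| =o |X|" by (simp add: ordIso_iff_ordLeq)
  with C X show ?thesis by blast
qed

end

lemma prob_space_cantor_measure: "prob_space cantor_measure"
  unfolding cantor_measure_def by (intro prob_space_PiM prob_space_measure_pmf)

lemma space_cantor_measure: "space cantor_measure = UNIV"
  unfolding cantor_measure_def by (simp add: space_PiM)

lemma cantor_cylinder_eq_prod_emb:
  "{x. \<forall>i<n. x i = z i} =
    prod_emb UNIV (\<lambda>_. measure_pmf (bernoulli_pmf (1/2))) {..<n} (\<Pi>\<^sub>E i\<in>{..<n}. {z i})"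
    (is "?C = ?E")
proof
  show "?C \<subseteq> ?E" by (auto simp: prod_emb_def)
  show "?E \<subseteq> ?C"
  proof
    fix x assume "x \<in> ?E"
    then have "restrict x {..<n} \<in> (\<Pi>\<^sub>E i\<in>{..<n}. {z i})"
      unfolding prod_emb_iff by (rule conjunct1[OF conjunct2])
    then have "restrict x {..<n} i \<in> {z i}" if "i < n" for i
      using PiE_mem that by (metis lessThan_iff)
    then show "x \<in> ?C" by simp
  qed
qed

lemma emeasure_cantor_cylinder:
  "emeasure cantor_measure {x. \<forall>i<n. x i = z i} = ennreal ((1/2) ^ n)"
proof -
  let ?M = "\<lambda>_::nat. measure_pmf (bernoulli_pmf (1/2))"
  have "emeasure cantor_measure {x. \<forall>i<n. x i = z i} = (\<Prod>i<n. emeasure (?M i) {z i})"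
    unfolding cantor_cylinder_eq_prod_emb cantor_measure_def
    by (rule emeasure_PiM_emb) (auto intro: prob_space_measure_pmf)
  also have "\<dots> = (\<Prod>i<n. ennreal (1/2))"
    by (intro prod.cong refl) (simp add: emeasure_pmf_single)
  also have "\<dots> = ennreal (1/2) ^ n"
    by (simp only: prod_constant card_lessThan)
  also have "\<dots> = ennreal ((1/2) ^ n)"
    by (rule ennreal_power) simp
  finally show ?thesis .
qed

lemma singleton_in_null: "{z} \<in> null"
proof -
  let ?B = "\<Inter>n. {x. \<forall>i<n. x i = z i}"
  have cylinders: "{x. \<forall>i<n. x i = z i} \<in> sets cantor_measure" for n
    unfolding cantor_cylinder_eq_prod_emb cantor_measure_def by (intro sets_PiM_I) auto
  have "emeasure cantor_measure ?B \<le> 0"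
  proof (rule ennreal_le_epsilon)
    fix e :: real assume "0 < e"
    then obtain n where n: "(1/2::real) ^ n < e" using real_arch_pow_inv[of e "1/2"] by auto
    have "emeasure cantor_measure ?B \<le> emeasure cantor_measure {x. \<forall>i<n. x i = z i}"
      using cylinders by (intro emeasure_mono) auto
    also have "\<dots> \<le> 0 + ennreal e"
      using n by (simp add: emeasure_cantor_cylinder ennreal_leI)
    finally show "emeasure cantor_measure ?B \<le> 0 + ennreal e" .
  qed
  then have "?B \<in> null_sets cantor_measure" using cylinders by auto
  moreover have "{z} \<subseteq> ?B" by auto
  ultimately show ?thesis unfolding null_def by blast
qed

lemma insert_in_null: "A \<in> null \<Longrightarrow> insert x A \<in> null"
proof -
  assume "A \<in> null"
  then obtain B where "B \<in> null_sets cantor_measure" "A \<subseteq> B" by (auto simp: null_def)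
  moreover obtain B' where "B' \<in> null_sets cantor_measure" "{x} \<subseteq> B'"
    using singleton_in_null by (auto simp: null_def)
  ultimately show "insert x A \<in> null" unfolding null_def by (intro CollectI bexI[of _ "B \<union> B'"]) auto
qed

lemma UNIV_not_in_null: "UNIV \<notin> null"
proof
  assume "UNIV \<in> null"
  then obtain B where "B \<in> null_sets cantor_measure" "UNIV \<subseteq> B" by (auto simp: null_def)
  moreover have "B = space cantor_measure"
    using \<open>UNIV \<subseteq> B\<close> space_cantor_measure by auto
  ultimately have "emeasure cantor_measure (space cantor_measure) = 0"
    by (simp add: null_setsD1)
  then show False using prob_space.emeasure_space_1[OF prob_space_cantor_measure] by simp
qed

interpretation null: proper_set_ideal null
proof
  show "B \<in> null" if "A \<in> null" "B \<subseteq> A" for A B :: "(nat \<Rightarrow> bool) set"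
    using that unfolding null_def by blast
qed (fact insert_in_null, fact UNIV_not_in_null)

theorem mainTheorem11:
  shows "\<exists>C X. min_card_in maximal_chains_null C \<and> min_card_in non_null_sets X \<and> card_of C =o card_of X"
proof -
  have "non_null_sets = - null" by (auto simp: non_null_sets_def)
  then show ?thesis
    using null.mc_eq_non unfolding maximal_chains_null_def by simp
qed

end
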